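(* In the setting where $T_{zw}(\delta,s)=M_{22}(s)+M_{21}(s)\Delta(\delta)(I-M_{11}(s)\Delta(\delta))^{-1}M_{12}(s)$ with $\Delta(\delta)=\mathrm{diag}[\delta_1 I_{r_1},\dots,\delta_m I_{r_m}]$ and $M$ a fixed real-rational proper transfer matrix, let $\mathbb D=\{\delta\in\mathbb R^m: T_{zw}(\delta)\text{ is (well posed and) internally stable}\}$. Then $h_+:\delta\mapsto\|T_{zw}(\delta)\|_\infty$ is lower-$C^1$ on $\mathbb D$, and consequently $h_-:\delta\mapsto-\|T_{zw}(\delta)\|_\infty$ is upper-$C^1$ on $\mathbb D$.
   Context: A locally Lipschitz function $f:\mathbb R^n\to\mathbb R$ is lower-$C^1$ at $x_0$ if there exist a compact space $\mathbb K$, a neighborhood $U$ of $x_0$ and a mapping $F:\mathbb R^n\times\mathbb K\to\mathbb R$ with $F$ and $\partial F/\partial x$ jointly continuous such that $f(x)=\max_{y\in\mathbb K}F(x,y)$ for all $x\in U$; $f$ is lower-$C^1$ on a set if it is so at each point of the set. $f$ is upper-$C^1$ if $-f$ is lower-$C^1$. $\|\cdot\|_\infty$ is the $H_\infty$ norm, $\|G\|_\infty=\sup_{\omega\in[0,\infty]}\overline\sigma(G(j\omega))$. *)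

theory Defs
  imports "HOL-Analysis.Analysis"
begin

text \<open>The compact parameter space K is taken to be a compact subset of the Hilbert-cube
  ambient space nat => real (product topology); every compact metrizable space embeds there.\<close>

definition lower_C1_at :: "(real^'n \<Rightarrow> real) \<Rightarrow> real^'n \<Rightarrow> bool" where
  "lower_C1_at f x0 \<longleftrightarrow>
     (\<exists>V L. open V \<and> x0 \<in> V \<and> L-lipschitz_on V f) \<and>
     (\<exists>(K :: (nat \<Rightarrow> real) set) U (F :: real^'n \<Rightarrow> (nat \<Rightarrow> real) \<Rightarrow> real)
        (dF :: real^'n \<Rightarrow> (nat \<Rightarrow> real) \<Rightarrow> real^'n).
        compact K \<and> open U \<and> x0 \<in> U \<and>
        continuous_on (UNIV \<times> K) (\<lambda>(x, y). F x y) \<and>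
        continuous_on (UNIV \<times> K) (\<lambda>(x, y). dF x y) \<and>
        (\<forall>x. \<forall>y\<in>K. ((\<lambda>x'. F x' y) has_derivative (\<lambda>h. dF x y \<bullet> h)) (at x)) \<and>
        (\<forall>x\<in>U. (\<exists>y\<in>K. F x y = f x) \<and> (\<forall>y\<in>K. F x y \<le> f x)))"

definition lower_C1_on :: "(real^'n \<Rightarrow> real) \<Rightarrow> (real^'n) set \<Rightarrow> bool" where
  "lower_C1_on f S \<longleftrightarrow> (\<forall>x\<in>S. lower_C1_at f x)"

definition upper_C1_on :: "(real^'n \<Rightarrow> real) \<Rightarrow> (real^'n) set \<Rightarrow> bool" where
  "upper_C1_on f S \<longleftrightarrow> lower_C1_on (\<lambda>x. - f x) S"

definition cmat :: "real^'n^'m \<Rightarrow> complex^'n^'m" where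
  "cmat M = (\<chi> i j. complex_of_real (M $ i $ j))"

definition hurwitz :: "real^'n^'n \<Rightarrow> bool" where
  "hurwitz A \<longleftrightarrow> (\<forall>(lam::complex) (v::complex^'n). v \<noteq> 0 \<and> cmat A *v v = lam *s v \<longrightarrow> Re lam < 0)"

text \<open>Largest singular value = induced Euclidean (2-)operator norm.\<close>
definition sigma_max :: "complex^'n^'m \<Rightarrow> real" where
  "sigma_max G = onorm (\<lambda>v. G *v v)"

definition tf :: "real^'x^'x \<Rightarrow> real^'w^'x \<Rightarrow> real^'x^'z \<Rightarrow> real^'w^'z \<Rightarrow> complex \<Rightarrow> complex^'w^'z" where
  "tf A B C D s = cmat C ** matrix_inv (mat s - cmat A) ** cmat B + cmat D"

text \<open>H-infinity norm of a stable realization: sup over omega in [0, infinity] of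
  sigma_max (G(j omega)); the value at omega = infinity is sigma_max D.\<close>
definition hinf_norm :: "real^'x^'x \<Rightarrow> real^'w^'x \<Rightarrow> real^'x^'z \<Rightarrow> real^'w^'z \<Rightarrow> real" where
  "hinf_norm A B C D =
     Sup ((\<lambda>\<omega>. sigma_max (tf A B C D (\<i> * complex_of_real \<omega>))) ` {0..} \<union> {sigma_max (cmat D)})"

text \<open>Delta(delta) = diag[delta_1 I_r1, ..., delta_m I_rm]: the uncertainty channel is indexed by
  the finite type 'r, and blk i says which parameter delta_k acts on channel coordinate i.\<close>
definition Delta :: "('r \<Rightarrow> 'm) \<Rightarrow> real^'m \<Rightarrow> real^'r^'r" where
  "Delta blk \<delta> = (\<chi> i j. if i = j then \<delta> $ blk i else 0)"

text \<open>M is given by a state-space realization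
   xdot = A x + B1 wD + B2 w,  zD = C1 x + D11 wD + D12 w,  z = C2 x + D21 wD + D22 w,
  closed by wD = Delta(delta) zD.\<close>

definition well_posed :: "real^'r^'r \<Rightarrow> ('r \<Rightarrow> 'm) \<Rightarrow> real^'m \<Rightarrow> bool" where
  "well_posed D11 blk \<delta> \<longleftrightarrow> invertible (mat 1 - D11 ** Delta blk \<delta>)"

definition Phi :: "real^'r^'r \<Rightarrow> ('r \<Rightarrow> 'm) \<Rightarrow> real^'m \<Rightarrow> real^'r^'r" where
  "Phi D11 blk \<delta> = Delta blk \<delta> ** matrix_inv (mat 1 - D11 ** Delta blk \<delta>)"

definition Acl :: "real^'x^'x \<Rightarrow> real^'r^'x \<Rightarrow> real^'x^'r \<Rightarrow> real^'r^'r \<Rightarrow> ('r \<Rightarrow> 'm) \<Rightarrow> real^'m \<Rightarrow> real^'x^'x" where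
  "Acl A B1 C1 D11 blk \<delta> = A + B1 ** Phi D11 blk \<delta> ** C1"

definition Bcl :: "real^'w^'x \<Rightarrow> real^'r^'x \<Rightarrow> real^'w^'r \<Rightarrow> real^'r^'r \<Rightarrow> ('r \<Rightarrow> 'm) \<Rightarrow> real^'m \<Rightarrow> real^'w^'x" where
  "Bcl B2 B1 D12 D11 blk \<delta> = B2 + B1 ** Phi D11 blk \<delta> ** D12"

definition Ccl :: "real^'x^'z \<Rightarrow> real^'r^'z \<Rightarrow> real^'x^'r \<Rightarrow> real^'r^'r \<Rightarrow> ('r \<Rightarrow> 'm) \<Rightarrow> real^'m \<Rightarrow> real^'x^'z" where
  "Ccl C2 D21 C1 D11 blk \<delta> = C2 + D21 ** Phi D11 blk \<delta> ** C1"

definition Dcl :: "real^'w^'z \<Rightarrow> real^'r^'z \<Rightarrow> real^'w^'r \<Rightarrow> real^'r^'r \<Rightarrow> ('r \<Rightarrow> 'm) \<Rightarrow> real^'m \<Rightarrow> real^'w^'z" where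
  "Dcl D22 D21 D12 D11 blk \<delta> = D22 + D21 ** Phi D11 blk \<delta> ** D12"

definition stab_set ::
  "real^'x^'x \<Rightarrow> real^'r^'x \<Rightarrow> real^'x^'r \<Rightarrow> real^'r^'r \<Rightarrow> ('r \<Rightarrow> 'm) \<Rightarrow> (real^'m) set" where
  "stab_set A B1 C1 D11 blk =
     {\<delta>. well_posed D11 blk \<delta> \<and> hurwitz (Acl A B1 C1 D11 blk \<delta>)}"

definition hplus ::
  "real^'x^'x \<Rightarrow> real^'r^'x \<Rightarrow> real^'w^'x \<Rightarrow> real^'x^'r \<Rightarrow> real^'x^'z \<Rightarrow>
   real^'r^'r \<Rightarrow> real^'w^'r \<Rightarrow> real^'r^'z \<Rightarrow> real^'w^'z \<Rightarrow> ('r \<Rightarrow> 'm) \<Rightarrow> real^'m \<Rightarrow> real" where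
  "hplus A B1 B2 C1 C2 D11 D12 D21 D22 blk \<delta> =
     hinf_norm (Acl A B1 C1 D11 blk \<delta>) (Bcl B2 B1 D12 D11 blk \<delta>)
               (Ccl C2 D21 C1 D11 blk \<delta>) (Dcl D22 D21 D12 D11 blk \<delta>)"

end

theory Submission
  imports Defs
begin

text \<open>
  For a stable parameter \<delta>, the H-infinity norm of the
  closed loop is a supremum over frequencies \<omega> \<in> [0, \<infinity>] of largest singular values, and a
  largest singular value is a maximum of Re (u* G v) over unit vectors u, v.  Mapping the
  frequencies onto the compact arc {z. |z| = 1, Im z \<ge> 0} by the Cayley transform
  s = (1+z)/(1-z) (z = 1 corresponding to \<omega> = \<infinity>), h_+(\<delta>) becomes the maximum of
  Re (u* G(\<delta>, z) v) over the compact set K = arc \<times> sphere \<times> sphere, where G(\<delta>, z) is a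
  rational, hence C1, function of \<delta> as long as the closed loop stays well posed and the
  "pencil" (1+z) I - (1-z) A_cl(\<delta>) stays nonsingular on the arc; by internal stability and
  compactness this holds on a neighbourhood of \<delta>0.  The definition of lower-C1 demands a family
  that is C1 on all of R^m, so the parameter is first passed through a smooth saturation that
  fixes a small ball around \<delta>0 and maps everything into the good neighbourhood.
\<close>

section \<open>Families of functions that are C1 in a real vector parameter\<close>

text \<open>The derivative of a complex function of x \<in> R^m is encoded by its vector of partial
  derivatives d \<in> C^m; it acts on an increment h by the pairing below.\<close>

definition grad_apply :: "complex^'m \<Rightarrow> real^'m \<Rightarrow> complex" where
  "grad_apply d h = (\<Sum>i\<in>UNIV. of_real (h$i) * d$i)"

lemma grad_apply_add: "grad_apply (a + b) h = grad_apply a h + grad_apply b h"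
  by (simp add: grad_apply_def ring_distribs sum.distrib)

lemma grad_apply_scale: "grad_apply (c *s d) h = c * grad_apply d h"
  by (simp add: grad_apply_def sum_distrib_left mult_ac)

lemma grad_apply_uminus: "grad_apply (- a) h = - grad_apply a h"
  by (simp add: grad_apply_def sum_negf)

lemma grad_apply_zero: "grad_apply 0 = (\<lambda>h. 0)"
  by (simp add: grad_apply_def[abs_def])

lemma grad_apply_axis: "grad_apply (axis k c) h = of_real (h$k) * c"
  by (simp add: grad_apply_def axis_def if_distrib sum.delta' cong: if_cong)

definition C1_family :: "(real^'m) set \<Rightarrow> 'k::topological_space set \<Rightarrow> (real^'m \<Rightarrow> 'k \<Rightarrow> complex) \<Rightarrow> bool" where
  "C1_family V K g \<longleftrightarrow> continuous_on (V \<times> K) (\<lambda>p. g (fst p) (snd p)) \<and>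
     (\<exists>d. continuous_on (V \<times> K) (\<lambda>p. d (fst p) (snd p)) \<and>
        (\<forall>x\<in>V. \<forall>y\<in>K. ((\<lambda>x. g x y) has_derivative grad_apply (d x y)) (at x)))"

lemma C1_familyI:
  assumes "continuous_on (V \<times> K) (\<lambda>p. g (fst p) (snd p))"
    and "continuous_on (V \<times> K) (\<lambda>p. d (fst p) (snd p))"
    and "\<And>x y. x \<in> V \<Longrightarrow> y \<in> K \<Longrightarrow> ((\<lambda>x. g x y) has_derivative grad_apply (d x y)) (at x)"
  shows "C1_family V K g"
  using assms unfolding C1_family_def by blast

lemma C1_familyE:
  assumes "C1_family V K g"
  obtains d where "continuous_on (V \<times> K) (\<lambda>p. d (fst p) (snd p))"
    and "\<And>x y. x \<in> V \<Longrightarrow> y \<in> K \<Longrightarrow> ((\<lambda>x. g x y) has_derivative grad_apply (d x y)) (at x)"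
  using assms unfolding C1_family_def by blast

lemma C1_family_continuous: "C1_family V K g \<Longrightarrow> continuous_on (V \<times> K) (\<lambda>p. g (fst p) (snd p))"
  unfolding C1_family_def by blast

lemma continuous_on_vector_scalar_mult [continuous_intros]:
  fixes c :: "'a::topological_space \<Rightarrow> 'b::real_normed_algebra"
  assumes "continuous_on S c" "continuous_on S d"
  shows "continuous_on S (\<lambda>p. c p *s d p)"
  unfolding vector_scalar_mult_def
  by (intro continuous_on_vec_lambda continuous_on_mult assms(1) continuous_on_component assms(2))

lemma C1_family_const:
  assumes "continuous_on K c"
  shows "C1_family V K (\<lambda>x y. c y)"
proof (rule C1_familyI[where d="\<lambda>x y. 0"])
  show "continuous_on (V \<times> K) (\<lambda>p. c (snd p))"
    by (rule continuous_on_compose2[OF assms continuous_on_snd]) auto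
qed (auto simp: grad_apply_zero)

lemma C1_family_constant: "C1_family V K (\<lambda>x y. c)"
  using C1_family_const[of K "\<lambda>y. c"] by simp

lemma C1_family_coord:
  fixes V :: "(real^'m) set"
  shows "C1_family V K (\<lambda>x y. complex_of_real (x$k))"
proof (rule C1_familyI[where d="\<lambda>x y. axis k 1"])
  show "continuous_on (V \<times> K) (\<lambda>p. complex_of_real (fst p $ k))"
    by (intro continuous_intros)
  have "bounded_linear (\<lambda>h::real^'m. complex_of_real (h$k))"
    by (rule bounded_linear_compose[OF bounded_linear_of_real bounded_linear_vec_nth])
  moreover have "grad_apply (axis k 1) = (\<lambda>h::real^'m. complex_of_real (h$k))"
    by (simp add: fun_eq_iff grad_apply_axis)
  ultimately show "((\<lambda>x. complex_of_real (x$k)) has_derivative grad_apply (axis k 1)) (at x)" for x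
    by (simp add: bounded_linear_imp_has_derivative)
qed auto

lemma C1_family_add:
  assumes "C1_family V K f" "C1_family V K g"
  shows "C1_family V K (\<lambda>x y. f x y + g x y)"
proof -
  obtain df where df: "continuous_on (V \<times> K) (\<lambda>p. df (fst p) (snd p))"
    "\<And>x y. x \<in> V \<Longrightarrow> y \<in> K \<Longrightarrow> ((\<lambda>x. f x y) has_derivative grad_apply (df x y)) (at x)"
    by (rule C1_familyE[OF assms(1)]) blast
  obtain dg where dg: "continuous_on (V \<times> K) (\<lambda>p. dg (fst p) (snd p))"
    "\<And>x y. x \<in> V \<Longrightarrow> y \<in> K \<Longrightarrow> ((\<lambda>x. g x y) has_derivative grad_apply (dg x y)) (at x)"
    by (rule C1_familyE[OF assms(2)]) blast
  show ?thesis
  proof (rule C1_familyI[where d="\<lambda>x y. df x y + dg x y"])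
    show "continuous_on (V \<times> K) (\<lambda>p. f (fst p) (snd p) + g (fst p) (snd p))"
      using assms by (intro continuous_intros C1_family_continuous)
    show "continuous_on (V \<times> K) (\<lambda>p. df (fst p) (snd p) + dg (fst p) (snd p))"
      using df dg by (intro continuous_intros)
    show "((\<lambda>x. f x y + g x y) has_derivative grad_apply (df x y + dg x y)) (at x)"
      if "x \<in> V" "y \<in> K" for x y
      using has_derivative_add[OF df(2) dg(2), OF that that] by (simp add: grad_apply_add[abs_def])
  qed
qed

lemma C1_family_mult:
  assumes "C1_family V K f" "C1_family V K g"
  shows "C1_family V K (\<lambda>x y. f x y * g x y)"
proof -
  obtain df where df: "continuous_on (V \<times> K) (\<lambda>p. df (fst p) (snd p))"
    "\<And>x y. x \<in> V \<Longrightarrow> y \<in> K \<Longrightarrow> ((\<lambda>x. f x y) has_derivative grad_apply (df x y)) (at x)"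
    by (rule C1_familyE[OF assms(1)]) blast
  obtain dg where dg: "continuous_on (V \<times> K) (\<lambda>p. dg (fst p) (snd p))"
    "\<And>x y. x \<in> V \<Longrightarrow> y \<in> K \<Longrightarrow> ((\<lambda>x. g x y) has_derivative grad_apply (dg x y)) (at x)"
    by (rule C1_familyE[OF assms(2)]) blast
  note cf = C1_family_continuous[OF assms(1)] and cg = C1_family_continuous[OF assms(2)]
  show ?thesis
  proof (rule C1_familyI[where d="\<lambda>x y. f x y *s dg x y + g x y *s df x y"])
    show "continuous_on (V \<times> K) (\<lambda>p. f (fst p) (snd p) * g (fst p) (snd p))"
      using cf cg by (intro continuous_intros)
    show "continuous_on (V \<times> K) (\<lambda>p. f (fst p) (snd p) *s dg (fst p) (snd p) + g (fst p) (snd p) *s df (fst p) (snd p))"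
      using cf cg df(1) dg(1) by (intro continuous_intros)
    show "((\<lambda>x. f x y * g x y) has_derivative grad_apply (f x y *s dg x y + g x y *s df x y)) (at x)"
      if "x \<in> V" "y \<in> K" for x y
      by (rule has_derivative_eq_rhs[OF has_derivative_mult[OF df(2) dg(2), OF that that]])
        (simp add: fun_eq_iff grad_apply_add grad_apply_scale mult.commute)
  qed
qed

lemma C1_family_inverse:
  assumes "C1_family V K g" and nonzero: "\<And>x y. x \<in> V \<Longrightarrow> y \<in> K \<Longrightarrow> g x y \<noteq> 0"
  shows "C1_family V K (\<lambda>x y. inverse (g x y))"
proof -
  obtain dg where dg: "continuous_on (V \<times> K) (\<lambda>p. dg (fst p) (snd p))"
    "\<And>x y. x \<in> V \<Longrightarrow> y \<in> K \<Longrightarrow> ((\<lambda>x. g x y) has_derivative grad_apply (dg x y)) (at x)"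
    by (rule C1_familyE[OF assms(1)]) blast
  note cg = C1_family_continuous[OF assms(1)]
  have nonzero': "\<And>p. p \<in> V \<times> K \<Longrightarrow> g (fst p) (snd p) \<noteq> 0" using nonzero by auto
  show ?thesis
  proof (rule C1_familyI[where d="\<lambda>x y. (- (inverse (g x y) * inverse (g x y))) *s dg x y"])
    show "continuous_on (V \<times> K) (\<lambda>p. inverse (g (fst p) (snd p)))"
      using cg nonzero' by (intro continuous_intros) auto
    show "continuous_on (V \<times> K) (\<lambda>p. (- (inverse (g (fst p) (snd p)) * inverse (g (fst p) (snd p)))) *s dg (fst p) (snd p))"
      using cg dg(1) nonzero' by (intro continuous_intros) auto
    show "((\<lambda>x. inverse (g x y)) has_derivative grad_apply ((- (inverse (g x y) * inverse (g x y))) *s dg x y)) (at x)"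
      if "x \<in> V" "y \<in> K" for x y
      by (rule has_derivative_eq_rhs[OF Deriv.has_derivative_inverse[OF nonzero[OF that] dg(2)[OF that]]])
        (simp add: fun_eq_iff grad_apply_scale grad_apply_uminus mult_ac)
  qed
qed

lemma C1_family_uminus: "C1_family V K f \<Longrightarrow> C1_family V K (\<lambda>x y. - f x y)"
  using C1_family_mult[OF C1_family_constant[of V K "-1"]] by simp

lemma C1_family_diff: "C1_family V K f \<Longrightarrow> C1_family V K g \<Longrightarrow> C1_family V K (\<lambda>x y. f x y - g x y)"
  using C1_family_add[OF _ C1_family_uminus] by simp

lemma C1_family_sum:
  assumes "finite I" "\<And>i. i \<in> I \<Longrightarrow> C1_family V K (f i)"
  shows "C1_family V K (\<lambda>x y. \<Sum>i\<in>I. f i x y)"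
  using assms by (induction I rule: finite_induct) (simp_all add: C1_family_constant C1_family_add)

lemma C1_family_prod:
  assumes "finite I" "\<And>i. i \<in> I \<Longrightarrow> C1_family V K (f i)"
  shows "C1_family V K (\<lambda>x y. \<Prod>i\<in>I. f i x y)"
  using assms by (induction I rule: finite_induct) (simp_all add: C1_family_constant C1_family_mult)

lemma C1_family_cong:
  assumes "C1_family V K f" "open V" "\<And>x y. x \<in> V \<Longrightarrow> y \<in> K \<Longrightarrow> f x y = g x y"
  shows "C1_family V K g"
proof -
  obtain d where d: "continuous_on (V \<times> K) (\<lambda>p. d (fst p) (snd p))"
    "\<And>x y. x \<in> V \<Longrightarrow> y \<in> K \<Longrightarrow> ((\<lambda>x. f x y) has_derivative grad_apply (d x y)) (at x)"
    by (rule C1_familyE[OF assms(1)]) blast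
  show ?thesis
  proof (rule C1_familyI[OF _ d(1)])
    show "continuous_on (V \<times> K) (\<lambda>p. g (fst p) (snd p))"
      using C1_family_continuous[OF assms(1)]
      by (rule continuous_on_cong[THEN iffD1, rotated 2]) (auto simp: assms(3))
    show "((\<lambda>x. g x y) has_derivative grad_apply (d x y)) (at x)" if "x \<in> V" "y \<in> K" for x y
      using d(2)[OF that] assms(2) that(1)
      by (rule has_derivative_transform_within_open) (use that assms(3) in auto)
  qed
qed

lemma C1_family_continuous_in_x:
  assumes "C1_family V K g" "y \<in> K"
  shows "continuous_on V (\<lambda>x. g x y)"
  by (rule continuous_on_compose2[OF C1_family_continuous[OF assms(1)], of V "\<lambda>x. (x, y)", simplified])
    (use assms(2) in \<open>auto intro: continuous_intros\<close>)

lemma C1_family_continuous_in_y: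
  assumes "C1_family V K g" "x \<in> V"
  shows "continuous_on K (g x)"
  by (rule continuous_on_compose2[OF C1_family_continuous[OF assms(1)], of K "\<lambda>y. (x, y)", simplified])
    (use assms(2) in \<open>auto intro: continuous_intros\<close>)

definition C1_matrix_family ::
  "(real^'m) set \<Rightarrow> 'k::topological_space set \<Rightarrow> (real^'m \<Rightarrow> 'k \<Rightarrow> complex^'b^'a) \<Rightarrow> bool" where
  "C1_matrix_family V K M \<longleftrightarrow> (\<forall>i j. C1_family V K (\<lambda>x y. M x y $ i $ j))"

lemma C1_matrix_family_entry: "C1_matrix_family V K M \<Longrightarrow> C1_family V K (\<lambda>x y. M x y $ i $ j)"
  unfolding C1_matrix_family_def by blast

lemma C1_matrix_family_constant: "C1_matrix_family V K (\<lambda>x y. C)"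
  unfolding C1_matrix_family_def by (intro allI C1_family_constant)

lemma C1_matrix_family_mat:
  assumes "continuous_on K c"
  shows "C1_matrix_family V K (\<lambda>x y. mat (c y))"
  unfolding C1_matrix_family_def mat_def
proof (intro allI)
  show "C1_family V K (\<lambda>x y. (\<chi> i j. if i = j then c y else 0) $ i $ j)" for i j
    by (cases "i = j") (auto intro: C1_family_const[OF assms] C1_family_constant)
qed

lemma C1_matrix_family_add:
  "C1_matrix_family V K M \<Longrightarrow> C1_matrix_family V K N \<Longrightarrow> C1_matrix_family V K (\<lambda>x y. M x y + N x y)"
  unfolding C1_matrix_family_def by (simp add: C1_family_add)

lemma C1_matrix_family_diff:
  "C1_matrix_family V K M \<Longrightarrow> C1_matrix_family V K N \<Longrightarrow> C1_matrix_family V K (\<lambda>x y. M x y - N x y)"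
  unfolding C1_matrix_family_def by (simp add: C1_family_diff)

lemma C1_matrix_family_mult:
  assumes "C1_matrix_family V K M" "C1_matrix_family V K N"
  shows "C1_matrix_family V K (\<lambda>x y. M x y ** N x y)"
  unfolding C1_matrix_family_def matrix_matrix_mult_def using assms
  by (auto intro!: C1_family_sum C1_family_mult C1_matrix_family_entry)

text \<open>The determinant is a polynomial in the entries.\<close>

lemma C1_family_det: "C1_matrix_family V K M \<Longrightarrow> C1_family V K (\<lambda>x y. det (M x y))"
  unfolding det_def
  by (auto intro!: C1_family_sum C1_family_mult C1_family_prod C1_family_constant
      C1_matrix_family_entry finite_permutations)

lemma matrix_inv_works:
  fixes A :: "'a::semiring_1^'n^'m"
  assumes "invertible A"
  shows "A ** matrix_inv A = mat 1" "matrix_inv A ** A = mat 1"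
proof -
  have "\<exists>A'. A ** A' = mat 1 \<and> A' ** A = mat 1" using assms unfolding invertible_def by blast
  then have "A ** matrix_inv A = mat 1 \<and> matrix_inv A ** A = mat 1"
    unfolding matrix_inv_def by (rule someI_ex)
  then show "A ** matrix_inv A = mat 1" "matrix_inv A ** A = mat 1" by auto
qed

lemma matrix_inv_unique:
  fixes A :: "'a::semiring_1^'n^'m"
  assumes "A ** B = mat 1" "B ** A = mat 1"
  shows "matrix_inv A = B"
proof -
  have inv: "invertible A" using assms unfolding invertible_def by blast
  have "matrix_inv A = matrix_inv A ** (A ** B)" by (simp add: assms)
  also have "\<dots> = (matrix_inv A ** A) ** B" by (simp add: matrix_mul_assoc)
  also have "\<dots> = B" by (simp add: matrix_inv_works[OF inv])
  finally show ?thesis .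
qed

lemma matrix_inv_cramer:
  fixes A :: "'a::field^'n^'n"
  assumes "det A \<noteq> 0"
  shows "matrix_inv A $ i $ j = det (\<chi> r c. if c = i then (if r = j then 1 else 0) else A$r$c) / det A"
proof -
  have inv: "invertible A" using assms invertible_det_nz by blast
  let ?X = "matrix_inv A"
  have "A *v (?X *v axis j 1) = axis j 1"
    by (simp add: matrix_vector_mul_assoc matrix_inv_works[OF inv])
  then have "?X *v axis j 1 = (\<chi> k. det (\<chi> r c. if c = k then axis j 1 $ r else A$r$c) / det A)"
    using cramer[OF assms] by blast
  moreover have "(?X *v axis j 1) $ i = ?X $ i $ j"
    by (simp add: matrix_vector_mult_def axis_def if_distrib sum.delta' cong: if_cong)
  moreover have "(\<chi> r c. if c = i then axis j 1 $ r else A$r$c) = (\<chi> r c. if c = i then (if r = j then 1 else 0) else A$r$c)"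
    by (auto simp: axis_def vec_eq_iff)
  ultimately show ?thesis by simp
qed

lemma C1_matrix_family_inverse:
  assumes "C1_matrix_family V K M" "open V" "\<And>x y. x \<in> V \<Longrightarrow> y \<in> K \<Longrightarrow> det (M x y) \<noteq> 0"
  shows "C1_matrix_family V K (\<lambda>x y. matrix_inv (M x y))"
  unfolding C1_matrix_family_def
proof (intro allI)
  fix i j
  have minor: "C1_matrix_family V K (\<lambda>x y. \<chi> r c. if c = i then if r = j then 1 else 0 else M x y $ r $ c)"
    unfolding C1_matrix_family_def
  proof (intro allI)
    show "C1_family V K (\<lambda>x y. (\<chi> r c. if c = i then if r = j then 1 else 0 else M x y $ r $ c) $ r $ c)" for r c
      by (cases "c = i") (auto intro: C1_family_constant C1_matrix_family_entry[OF assms(1)])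
  qed
  have "C1_family V K (\<lambda>x y. det (\<chi> r c. if c = i then (if r = j then 1 else 0) else M x y $r$c) * inverse (det (M x y)))"
    using assms by (intro C1_family_mult C1_family_inverse C1_family_det minor) auto
  then show "C1_family V K (\<lambda>x y. matrix_inv (M x y) $ i $ j)"
    by (rule C1_family_cong[OF _ assms(2)]) (simp add: matrix_inv_cramer[OF assms(3)] divide_inverse)
qed

definition scale_mat :: "complex \<Rightarrow> complex^'n^'m \<Rightarrow> complex^'n^'m" where
  "scale_mat c X = (\<chi> i j. c * X$i$j)"

lemma scale_mat_mult_left: "scale_mat a X ** Y = scale_mat a (X ** Y)"
  by (simp add: scale_mat_def vec_eq_iff matrix_matrix_mult_def sum_distrib_left mult.assoc)

lemma scale_mat_mult_right: "X ** scale_mat a Y = scale_mat a (X ** Y)"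
  by (simp add: scale_mat_def vec_eq_iff matrix_matrix_mult_def sum_distrib_left mult_ac)

lemma scale_mat_scale_mat: "scale_mat a (scale_mat b X) = scale_mat (a * b) X"
  by (simp add: scale_mat_def vec_eq_iff mult.assoc)

lemma scale_mat_1 [simp]: "scale_mat 1 X = X"
  by (simp add: scale_mat_def vec_eq_iff)

lemma scale_mat_0 [simp]: "scale_mat 0 X = 0"
  by (simp add: scale_mat_def vec_eq_iff)

lemma scale_mat_inverse:
  assumes "a \<noteq> 0" "invertible X"
  shows "matrix_inv (scale_mat a X) = scale_mat (inverse a) (matrix_inv X)"
  by (rule matrix_inv_unique) (simp_all add: scale_mat_mult_left scale_mat_mult_right
      scale_mat_scale_mat matrix_inv_works[OF assms(2)] assms(1))

lemma scale_mat_mult_vec: "scale_mat a X *v v = a *s (X *v v)"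
  by (simp add: scale_mat_def vec_eq_iff matrix_vector_mult_def sum_distrib_left mult.assoc)

lemma mat_mult_vec: "mat (c::complex) *v v = c *s v"
  by (simp add: vec_eq_iff matrix_vector_mult_def mat_def if_distrib if_distribR cong: if_cong)

lemma C1_matrix_family_scale:
  "C1_family V K c \<Longrightarrow> C1_matrix_family V K M \<Longrightarrow> C1_matrix_family V K (\<lambda>x y. scale_mat (c x y) (M x y))"
  unfolding C1_matrix_family_def scale_mat_def by (auto intro: C1_family_mult)

lemma cmat_add: "cmat (X + Y) = cmat X + cmat Y"
  by (simp add: cmat_def vec_eq_iff)

lemma cmat_diff: "cmat (X - Y) = cmat X - cmat Y"
  by (simp add: cmat_def vec_eq_iff)

lemma cmat_mult: "cmat (X ** Y) = cmat X ** cmat Y"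
  by (simp add: cmat_def vec_eq_iff matrix_matrix_mult_def)

lemma cmat_mat: "cmat (mat c) = mat (complex_of_real c)"
  by (simp add: cmat_def vec_eq_iff mat_def)

lemma det_cmat: "det (cmat X) = complex_of_real (det X)"
  by (simp add: det_def cmat_def)

lemma cmat_inverse:
  assumes "invertible X"
  shows "cmat (matrix_inv X) = matrix_inv (cmat X)"
proof -
  have "cmat X ** cmat (matrix_inv X) = mat 1" "cmat (matrix_inv X) ** cmat X = mat 1"
    using matrix_inv_works[OF assms] by (simp_all add: cmat_mult[symmetric] cmat_mat)
  then show ?thesis by (simp add: matrix_inv_unique)
qed

section \<open>A criterion for lower-C1\<close>

text \<open>A function that is locally a maximum of a compact family of C1 functions with jointly
  continuous gradients is locally Lipschitz: the gradients are bounded near x0, so each member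
  of the family is Lipschitz there, and a maximum of such functions inherits the constant.\<close>

lemma max_of_C1_family_lipschitz:
  fixes F :: "real^'n \<Rightarrow> 'k::topological_space \<Rightarrow> real" and dF :: "real^'n \<Rightarrow> 'k \<Rightarrow> real^'n"
  assumes K: "compact K" and cont_dF: "continuous_on (UNIV \<times> K) (\<lambda>(x, y). dF x y)"
    and deriv: "\<And>x y. y \<in> K \<Longrightarrow> ((\<lambda>x'. F x' y) has_derivative (\<lambda>h. dF x y \<bullet> h)) (at x)"
    and U: "open U" "x0 \<in> U"
    and max: "\<And>x. x \<in> U \<Longrightarrow> (\<exists>y\<in>K. F x y = f x) \<and> (\<forall>y\<in>K. F x y \<le> f x)"
  shows "\<exists>V L. open V \<and> x0 \<in> V \<and> L-lipschitz_on V f"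
proof -
  obtain e where e: "e > 0" "ball x0 e \<subseteq> U" using U open_contains_ball by blast
  have "continuous_on (cball x0 e \<times> K) (\<lambda>(x, y). dF x y)"
    by (rule continuous_on_subset[OF cont_dF]) auto
  then have "compact ((\<lambda>(x, y). dF x y) ` (cball x0 e \<times> K))"
    using K by (intro compact_continuous_image compact_Times compact_cball)
  then obtain B where B_pos: "B > 0"
    and bound: "\<And>v. v \<in> (\<lambda>(x, y). dF x y) ` (cball x0 e \<times> K) \<Longrightarrow> norm v \<le> B"
    using compact_imp_bounded bounded_pos by metis
  have B: "norm (dF x y) \<le> B" if "x \<in> cball x0 e" "y \<in> K" for x y
    using bound[of "dF x y"] that by force
  have F_lipschitz: "F x y - F x' y \<le> B * dist x x'"
    if x: "x \<in> ball x0 e" "x' \<in> ball x0 e" and y: "y \<in> K" for x x' y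
  proof -
    have "norm (F x y - F x' y) \<le> B * norm (x - x')"
    proof (rule differentiable_bound[where f="\<lambda>x'. F x' y" and f'="\<lambda>z h. dF z y \<bullet> h" and S="ball x0 e"])
      show "convex (ball x0 e)" by simp
      show "((\<lambda>x'. F x' y) has_derivative (\<lambda>h. dF z y \<bullet> h)) (at z within ball x0 e)" if "z \<in> ball x0 e" for z
        using deriv[OF y] by (rule has_derivative_at_withinI)
      show "onorm (\<lambda>h. dF z y \<bullet> h) \<le> B" if z: "z \<in> ball x0 e" for z
      proof (rule onorm_le)
        fix h
        have "norm (dF z y \<bullet> h) \<le> norm (dF z y) * norm h" using Cauchy_Schwarz_ineq2 by simp
        also have "\<dots> \<le> B * norm h" using B[of z y] z y by (intro mult_right_mono) auto
        finally show "norm (dF z y \<bullet> h) \<le> B * norm h" .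
      qed
    qed (use x in auto)
    then show ?thesis by (simp add: dist_norm)
  qed
  have f_lipschitz: "f x - f x' \<le> B * dist x x'" if x: "x \<in> ball x0 e" "x' \<in> ball x0 e" for x x'
  proof -
    have xU: "x \<in> U" "x' \<in> U" using x e by auto
    obtain y where y: "y \<in> K" "F x y = f x" using max xU(1) by blast
    have "F x' y \<le> f x'" using max xU(2) y(1) by blast
    then show ?thesis using F_lipschitz[OF x y(1)] y(2) by linarith
  qed
  have "B-lipschitz_on (ball x0 e) f"
  proof (rule lipschitz_onI)
    fix x x' assume x: "x \<in> ball x0 e" "x' \<in> ball x0 e"
    have "f x - f x' \<le> B * dist x x'" "f x' - f x \<le> B * dist x x'"
      using f_lipschitz[OF x] f_lipschitz[OF x(2,1)] by (auto simp: dist_commute)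
    then show "dist (f x) (f x') \<le> B * dist x x'" by (simp add: dist_real_def abs_le_iff)
  qed (use B_pos in simp)
  then show ?thesis using e(1) by (intro exI[of _ "ball x0 e"] exI[of _ B]) auto
qed

text \<open>In the definition of lower-C1 the Lipschitz requirement is therefore redundant.\<close>

lemma lower_C1_atI:
  fixes F :: "real^'n \<Rightarrow> (nat \<Rightarrow> real) \<Rightarrow> real"
  assumes "compact K" "open U" "x0 \<in> U"
    and "continuous_on (UNIV \<times> K) (\<lambda>(x, y). F x y)" "continuous_on (UNIV \<times> K) (\<lambda>(x, y). dF x y)"
    and "\<And>x y. y \<in> K \<Longrightarrow> ((\<lambda>x'. F x' y) has_derivative (\<lambda>h. dF x y \<bullet> h)) (at x)"
    and "\<And>x. x \<in> U \<Longrightarrow> (\<exists>y\<in>K. F x y = f x) \<and> (\<forall>y\<in>K. F x y \<le> f x)"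
  shows "lower_C1_at f x0"
  unfolding lower_C1_at_def
proof
  show "\<exists>V L. open V \<and> x0 \<in> V \<and> L-lipschitz_on V f"
    by (rule max_of_C1_family_lipschitz[OF assms(1,5,6,2,3,7)])
  show "\<exists>(K :: (nat \<Rightarrow> real) set) U (F :: real^'n \<Rightarrow> (nat \<Rightarrow> real) \<Rightarrow> real)
      (dF :: real^'n \<Rightarrow> (nat \<Rightarrow> real) \<Rightarrow> real^'n). compact K \<and> open U \<and> x0 \<in> U \<and>
      continuous_on (UNIV \<times> K) (\<lambda>(x, y). F x y) \<and> continuous_on (UNIV \<times> K) (\<lambda>(x, y). dF x y) \<and>
      (\<forall>x. \<forall>y\<in>K. ((\<lambda>x'. F x' y) has_derivative (\<lambda>h. dF x y \<bullet> h)) (at x)) \<and>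
      (\<forall>x\<in>U. (\<exists>y\<in>K. F x y = f x) \<and> (\<forall>y\<in>K. F x y \<le> f x))"
    using assms by (intro exI[of _ K] exI[of _ U] exI[of _ F] exI[of _ dF]) blast
qed

text \<open>The parameter space may be any compact space K0 that embeds into nat \<Rightarrow> real with a
  continuous global left inverse, and the family may be given as real parts of a complex C1
  family: transport everything along the embedding.\<close>

lemma lower_C1_at_from_family:
  fixes f :: "real^'n \<Rightarrow> real" and g :: "real^'n \<Rightarrow> 'k::topological_space \<Rightarrow> complex"
    and emb :: "'k \<Rightarrow> nat \<Rightarrow> real" and dec :: "(nat \<Rightarrow> real) \<Rightarrow> 'k"
  assumes g: "C1_family UNIV K0 g" and K0: "compact K0"
    and emb: "continuous_on K0 emb" and dec: "continuous_on UNIV dec"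
    and dec_emb: "\<And>p. p \<in> K0 \<Longrightarrow> dec (emb p) = p"
    and U: "open U" "x0 \<in> U"
    and max: "\<And>x. x \<in> U \<Longrightarrow> (\<exists>p\<in>K0. Re (g x p) = f x) \<and> (\<forall>p\<in>K0. Re (g x p) \<le> f x)"
  shows "lower_C1_at f x0"
proof -
  obtain d where d: "continuous_on (UNIV \<times> K0) (\<lambda>p. d (fst p) (snd p))"
    "\<And>x y. x \<in> UNIV \<Longrightarrow> y \<in> K0 \<Longrightarrow> ((\<lambda>x. g x y) has_derivative grad_apply (d x y)) (at x)"
    by (rule C1_familyE[OF g]) blast
  define K where "K = emb ` K0"
  define F where "F x y = Re (g x (dec y))" for x y
  define dF where "dF x y = (\<chi> i. Re (d x (dec y) $ i))" for x y
  have dec_K: "dec y \<in> K0" if "y \<in> K" for y using that dec_emb by (auto simp: K_def)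
  have cont_dec: "continuous_on (UNIV \<times> K) (\<lambda>q. (fst q, dec (snd q)))"
    by (intro continuous_on_Pair continuous_on_fst continuous_on_id continuous_on_compose2[OF dec]
        continuous_on_snd) auto
  have into: "(\<lambda>q. (fst q, dec (snd q))) ` (UNIV \<times> K) \<subseteq> UNIV \<times> K0" using dec_K by auto
  show ?thesis
  proof (rule lower_C1_atI[of K U x0 F dF])
    show "compact K" unfolding K_def by (rule compact_continuous_image[OF emb K0])
    show "open U" "x0 \<in> U" by (fact U)+
    have "continuous_on (UNIV \<times> K) (\<lambda>q. g (fst q) (dec (snd q)))"
      using continuous_on_compose2[OF C1_family_continuous[OF g] cont_dec into] by simp
    then show "continuous_on (UNIV \<times> K) (\<lambda>(x, y). F x y)"
      unfolding F_def case_prod_unfold by (rule continuous_on_Re)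
    have "continuous_on (UNIV \<times> K) (\<lambda>q. d (fst q) (dec (snd q)))"
      using continuous_on_compose2[OF d(1) cont_dec into] by simp
    then show "continuous_on (UNIV \<times> K) (\<lambda>(x, y). dF x y)"
      unfolding dF_def case_prod_unfold
      by (intro continuous_on_vec_lambda continuous_on_Re continuous_on_component)
    show "((\<lambda>x'. F x' y) has_derivative (\<lambda>h. dF x y \<bullet> h)) (at x)" if "y \<in> K" for x y
    proof -
      have "((\<lambda>x'. F x' y) has_derivative (\<lambda>h. Re (grad_apply (d x (dec y)) h))) (at x)"
        unfolding F_def by (rule has_derivative_Re[OF d(2)[OF UNIV_I dec_K[OF that]]])
      moreover have "(\<lambda>h. Re (grad_apply (d x (dec y)) h)) = (\<lambda>h. dF x y \<bullet> h)"
        by (rule ext) (simp add: dF_def grad_apply_def inner_vec_def mult.commute)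
      ultimately show ?thesis by (simp only:)
    qed
    show "(\<exists>y\<in>K. F x y = f x) \<and> (\<forall>y\<in>K. F x y \<le> f x)" if "x \<in> U" for x
      using max[OF that] dec_emb by (auto simp: K_def F_def)
  qed
qed

text \<open>The compact parameter space will consist of triples (z, u, v) of a complex number and two
  complex vectors. They embed continuously into nat \<Rightarrow> real (real and imaginary parts of all
  coordinates, indexed through the pairing bijection), with a continuous global left inverse.\<close>

definition hc_encode :: "complex \<times> (complex^'z::finite) \<times> (complex^'w::finite) \<Rightarrow> nat \<Rightarrow> real" where
  "hc_encode p n = (case prod_decode n of (j, k) \<Rightarrow>
     if j = 0 then Re (fst p) else if j = 1 then Im (fst p)
     else if j = 2 then Re (fst (snd p) $ from_nat k) else if j = 3 then Im (fst (snd p) $ from_nat k)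
     else if j = 4 then Re (snd (snd p) $ from_nat k) else Im (snd (snd p) $ from_nat k))"

definition hc_decode :: "(nat \<Rightarrow> real) \<Rightarrow> complex \<times> (complex^'z::finite) \<times> (complex^'w::finite)" where
  "hc_decode y =
     (Complex (y (prod_encode (0, 0))) (y (prod_encode (1, 0))),
      \<chi> i. Complex (y (prod_encode (2, to_nat i))) (y (prod_encode (3, to_nat i))),
      \<chi> i. Complex (y (prod_encode (4, to_nat i))) (y (prod_encode (5, to_nat i))))"

lemma hc_decode_encode: "hc_decode (hc_encode p) = p"
  by (cases p) (simp add: hc_decode_def hc_encode_def vec_eq_iff complex_eq_iff)

lemma continuous_on_hc_decode: "continuous_on UNIV hc_decode"
proof -
  have "continuous_on UNIV (\<lambda>y::nat \<Rightarrow> real. Complex (y a) (y b))" for a b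
    unfolding Complex_eq by (intro continuous_intros continuous_on_product_coordinates)
  then show ?thesis
    unfolding hc_decode_def by (intro continuous_on_Pair continuous_on_vec_lambda)
qed

lemma continuous_on_hc_encode: "continuous_on S hc_encode"
proof (rule continuous_on_coordinatewise_then_product)
  fix n
  obtain j k where n: "prod_decode n = (j, k)" by fastforce
  consider "j = 0" | "j = 1" | "j = 2" | "j = 3" | "j = 4" | "j > 4" by linarith
  then show "continuous_on S (\<lambda>p. hc_encode p n)"
    by cases (simp_all add: hc_encode_def n continuous_intros)
qed

section \<open>A smooth saturation\<close>

text \<open>Applied coordinatewise around x0 it retracts R^m
  smoothly into a bounded neighbourhood of x0 while fixing a smaller one; this lets us extend
  a family defined only near x0 to a C1 family on all of R^m.\<close>

definition sat :: "real \<Rightarrow> real \<Rightarrow> real" where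
  "sat r t = (if t > r then 2*r - r^2/t else if t < -r then -2*r - r^2/t else t)"

definition sat' :: "real \<Rightarrow> real \<Rightarrow> real" where
  "sat' r t = r^2 / (max r \<bar>t\<bar>)^2"

lemma sat_id: "\<bar>t\<bar> \<le> r \<Longrightarrow> sat r t = t"
  by (auto simp: sat_def)

lemma sat_bound:
  assumes r: "r > 0"
  shows "\<bar>sat r t\<bar> \<le> 2*r"
proof -
  have "0 \<le> r^2/t" "r^2/t \<le> r" if "t > r"
    using that r by (auto simp: divide_le_eq power2_eq_square)
  moreover have "-r \<le> r^2/t" "r^2/t \<le> 0" if "t < -r"
  proof -
    have "r * r \<le> r * (-t)" using that r by (intro mult_left_mono) auto
    then show "-r \<le> r^2/t" using that r by (simp add: le_divide_eq power2_eq_square)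
    show "r^2/t \<le> 0" using that r by (simp add: divide_nonneg_neg)
  qed
  ultimately show ?thesis using r by (auto simp: sat_def)
qed

lemma sat_right: "r > 0 \<Longrightarrow> r \<le> t \<Longrightarrow> sat r t = 2*r - r^2/t"
  by (cases "t = r") (simp_all add: sat_def power2_eq_square)

lemma sat_left: "r > 0 \<Longrightarrow> t \<le> -r \<Longrightarrow> sat r t = -2*r - r^2/t"
  by (cases "t = -r") (simp_all add: sat_def power2_eq_square)

lemma derivative_on_piece:
  assumes "(g has_real_derivative D) (at t)" "t \<in> {a..b}" "\<And>y. y \<in> {a..b} \<Longrightarrow> g y = f y"
  shows "(f has_real_derivative D) (at t within {a..b})"
  using has_field_derivative_at_within[OF assms(1)] zero_less_one assms(2)
  by (rule has_field_derivative_transform_within) (use assms(3) in auto)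

lemma sat_piece_derivative:
  assumes r: "r > 0" and t: "t \<in> {a..b}"
    and piece: "(a = -r \<and> b = r) \<or> r \<le> a \<or> b \<le> -r"
  shows "(sat r has_real_derivative sat' r t) (at t within {a..b})"
  using piece
proof (elim disjE)
  assume ab: "a = -r \<and> b = r"
  then have "max r \<bar>t\<bar> = r" using t by auto
  then have sat'_eq: "sat' r t = 1" using r by (simp add: sat'_def)
  have "(sat r has_real_derivative 1) (at t within {a..b})"
    using DERIV_ident t by (rule derivative_on_piece) (use ab in \<open>simp add: sat_def\<close>)
  then show ?thesis using sat'_eq by simp
next
  assume "r \<le> a"
  then have rt: "r \<le> t" using t by auto
  then have sat'_eq: "sat' r t = r^2/t^2" using r by (simp add: sat'_def max_def)
  have "((\<lambda>t. 2*r - r^2/t) has_real_derivative r^2/t^2) (at t)"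
    using rt r by (auto intro!: derivative_eq_intros simp: power2_eq_square field_simps)
  then have "(sat r has_real_derivative r^2/t^2) (at t within {a..b})"
    using t by (rule derivative_on_piece)
      (use \<open>r \<le> a\<close> r in \<open>simp add: sat_right\<close>)
  then show ?thesis using sat'_eq by simp
next
  assume "b \<le> -r"
  then have rt: "t \<le> -r" using t by auto
  then have sat'_eq: "sat' r t = r^2/t^2" using r by (simp add: sat'_def max_def)
  have "((\<lambda>t. -2*r - r^2/t) has_real_derivative r^2/t^2) (at t)"
    using rt r by (auto intro!: derivative_eq_intros simp: power2_eq_square field_simps)
  then have "(sat r has_real_derivative r^2/t^2) (at t within {a..b})"
    using t by (rule derivative_on_piece)
      (use \<open>b \<le> -r\<close> r in \<open>simp add: sat_left\<close>)
  then show ?thesis using sat'_eq by simp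
qed

lemma has_real_derivative_glue:
  assumes "(f has_real_derivative D) (at_left t)" "(f has_real_derivative D) (at_right t)"
  shows "(f has_real_derivative D) (at t)"
  using assms unfolding has_field_derivative_iff using filterlim_at_split by blast

lemma sat_derivative:
  assumes r: "r > 0"
  shows "(sat r has_real_derivative sat' r t) (at t)"
proof -
  have interior: ?thesis if "a < t" "t < b" "(a = -r \<and> b = r) \<or> r \<le> a \<or> b \<le> -r" for a b
    using sat_piece_derivative[OF r _ that(3), of t] that(1,2) by (simp add: at_within_Icc_at)
  have left: "(sat r has_real_derivative sat' r t) (at_left t)"
    if "a < t" "(a = -r \<and> t = r) \<or> r \<le> a \<or> t \<le> -r" for a
    using sat_piece_derivative[OF r _ that(2), of t] that(1) by (simp add: at_within_Icc_at_left)
  have right: "(sat r has_real_derivative sat' r t) (at_right t)"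
    if "t < b" "(t = -r \<and> b = r) \<or> r \<le> t \<or> b \<le> -r" for b
    using sat_piece_derivative[OF r _ that(2), of t] that(1) by (simp add: at_within_Icc_at_right)
  consider "t > r" | "t < -r" | "\<bar>t\<bar> < r" | "t = r" | "t = -r" by linarith
  then show ?thesis
  proof cases
    case 1 then show ?thesis using interior[of r "t + 1"] by simp
  next
    case 2 then show ?thesis using interior[of "t - 1" "-r"] by simp
  next
    case 3 then show ?thesis using interior[of "-r" r] by simp
  next
    case 4 then show ?thesis
      using r left[of "-r"] right[of "r + 1"] by (intro has_real_derivative_glue) auto
  next
    case 5 then show ?thesis
      using r left[of "-r - 1"] right[of r] by (intro has_real_derivative_glue) auto
  qed
qed

lemma continuous_on_sat: "r > 0 \<Longrightarrow> continuous_on UNIV (sat r)"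
  using sat_derivative by (intro continuous_at_imp_continuous_on ballI DERIV_isCont) auto

lemma continuous_on_sat': "r > 0 \<Longrightarrow> continuous_on UNIV (sat' r)"
  unfolding sat'_def by (intro continuous_intros) auto

definition sat_map :: "real^'m \<Rightarrow> real \<Rightarrow> real^'m \<Rightarrow> real^'m" where
  "sat_map x0 r x = (\<chi> i. x0$i + sat r (x$i - x0$i))"

lemma sat_map_id:
  assumes "x \<in> cball x0 r"
  shows "sat_map x0 r x = x"
proof -
  have "\<bar>x$i - x0$i\<bar> \<le> r" for i
    using component_le_norm_cart[of "x - x0" i] assms by (simp add: dist_norm norm_minus_commute)
  then show ?thesis by (simp add: sat_map_def vec_eq_iff sat_id)
qed

lemma sat_map_close:
  fixes x0 :: "real^'m"
  assumes "r > 0"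
  shows "dist (sat_map x0 r x) x0 \<le> 2 * r * CARD('m)"
proof -
  have "dist (sat_map x0 r x) x0 \<le> (\<Sum>i\<in>UNIV. \<bar>(sat_map x0 r x - x0)$i\<bar>)"
    unfolding dist_norm by (rule norm_le_l1_cart)
  also have "\<dots> \<le> CARD('m) * (2*r)"
    by (rule sum_bounded_above) (simp add: sat_map_def sat_bound[OF assms])
  finally show ?thesis by (simp add: mult.commute)
qed

lemma C1_family_sat_map:
  fixes x0 :: "real^'m"
  assumes r: "r > 0"
  shows "C1_family V K (\<lambda>x y. complex_of_real (sat_map x0 r x $ k))"
proof (rule C1_familyI[where d="\<lambda>x y. axis k (complex_of_real (sat' r (x$k - x0$k)))"])
  show "continuous_on (V \<times> K) (\<lambda>p. complex_of_real (sat_map x0 r (fst p) $ k))"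
    unfolding sat_map_def
    by (simp, intro continuous_intros continuous_on_compose2[OF continuous_on_sat[OF r]]) auto
  show "continuous_on (V \<times> K) (\<lambda>p. axis k (complex_of_real (sat' r (fst p $ k - x0$k))))"
    unfolding axis_def
  proof (intro continuous_on_vec_lambda)
    have "continuous_on (V \<times> K) (\<lambda>p. complex_of_real (sat' r (fst p $ k - x0 $ k)))"
      by (intro continuous_intros continuous_on_compose2[OF continuous_on_sat'[OF r]]) auto
    then show "continuous_on (V \<times> K) (\<lambda>p. if i = k then complex_of_real (sat' r (fst p $ k - x0 $ k)) else 0)" for i
      by (cases "i = k") simp_all
  qed
  fix x y
  have "((\<lambda>x::real^'m. x$k - x0$k) has_derivative (\<lambda>h. h$k)) (at x)"
    by (intro has_derivative_diff[where g'="\<lambda>h. 0", simplified] has_derivative_const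
        bounded_linear_imp_has_derivative bounded_linear_vec_nth)
  from has_derivative_compose[OF this has_field_derivative_imp_has_derivative[OF sat_derivative[OF r]]]
  have "((\<lambda>x. sat r (x$k - x0$k)) has_derivative (\<lambda>h. sat' r (x$k - x0$k) * h$k)) (at x)"
    by (simp add: o_def)
  then have "((\<lambda>x. complex_of_real (x0$k + sat r (x$k - x0$k))) has_derivative
      (\<lambda>h. complex_of_real (0 + sat' r (x$k - x0$k) * h$k))) (at x)"
    by (intro has_derivative_of_real has_derivative_add has_derivative_const)
  then show "((\<lambda>x. complex_of_real (sat_map x0 r x $ k)) has_derivative
      grad_apply (axis k (complex_of_real (sat' r (x$k - x0$k))))) (at x)"
    by (simp add: sat_map_def grad_apply_axis[abs_def] mult.commute)
qed

section \<open>Singular values and the frequency arc\<close>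

lemma Re_hermitian_inner: "Re (\<Sum>i\<in>UNIV. cnj (u$i) * w$i) = u \<bullet> (w :: complex^'n)"
  by (simp add: inner_vec_def inner_complex_def)

lemma bounded_linear_matrix_vector_mult: "bounded_linear (\<lambda>v. (M :: complex^'w^'z) *v v)"
proof -
  have "linear (\<lambda>v. M *v v)"
  proof (rule linearI)
    show "M *v (a + b) = M *v a + M *v b" for a b by (simp add: matrix_vector_right_distrib)
    show "M *v (c *\<^sub>R b) = c *\<^sub>R (M *v b)" for c b
      by (simp add: vec_eq_iff matrix_vector_mult_def scaleR_sum_right)
  qed
  then show ?thesis by (simp add: linear_conv_bounded_linear)
qed

lemma inner_le_sigma_max:
  assumes "norm u = 1" "norm v = 1"
  shows "u \<bullet> (M *v v) \<le> sigma_max M"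
proof -
  have "u \<bullet> (M *v v) \<le> norm u * norm (M *v v)" by (rule norm_cauchy_schwarz)
  also have "\<dots> \<le> onorm (\<lambda>v. M *v v) * norm v"
    using onorm[OF bounded_linear_matrix_vector_mult] assms(1) by simp
  finally show ?thesis using assms(2) by (simp add: sigma_max_def)
qed

text \<open>The maximum is attained: take a maximizing unit vector v and u in the direction of M v.\<close>

lemma sigma_max_attained: "\<exists>u v. norm u = 1 \<and> norm v = 1 \<and> u \<bullet> (M *v v) = sigma_max (M :: complex^'w^'z)"
proof -
  interpret L: bounded_linear "\<lambda>v. M *v v" by (rule bounded_linear_matrix_vector_mult)
  have "\<exists>v\<in>sphere (0::complex^'w) 1. \<forall>y\<in>sphere 0 1. norm (M *v y) \<le> norm (M *v v)"
    by (rule continuous_attains_sup) (auto intro!: continuous_intros L.continuous_on compact_sphere)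
  then obtain v :: "complex^'w" where v: "norm v = 1"
    and v_max: "\<And>y. norm y = 1 \<Longrightarrow> norm (M *v y) \<le> norm (M *v v)"
    by auto
  have "onorm (\<lambda>v. M *v v) \<le> norm (M *v v)"
  proof (rule onorm_le)
    show "norm (M *v x) \<le> norm (M *v v) * norm x" for x
    proof (cases "x = 0")
      case False
      have "norm (M *v x) = norm x * norm (M *v (inverse (norm x) *\<^sub>R x))"
        using False by (simp add: L.scaleR)
      also have "\<dots> \<le> norm x * norm (M *v v)"
        using False by (intro mult_left_mono v_max) auto
      finally show ?thesis by (simp add: mult.commute)
    qed (simp add: L.zero)
  qed
  moreover have "norm (M *v v) \<le> onorm (\<lambda>v. M *v v)"
    using onorm[OF bounded_linear_matrix_vector_mult, of M v] v by simp
  ultimately have sv: "sigma_max M = norm (M *v v)" by (simp add: sigma_max_def)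
  show ?thesis
  proof (cases "M *v v = 0")
    case True
    obtain u :: "complex^'z" where "norm u = 1"
      using vector_choose_size[of 1] by auto
    then show ?thesis using True sv v by (intro exI[of _ u] exI[of _ v]) simp
  next
    case False
    define u where "u = inverse (norm (M *v v)) *\<^sub>R (M *v v)"
    have "norm u = 1" "u \<bullet> (M *v v) = norm (M *v v)"
      using False by (simp_all add: u_def dot_square_norm power2_eq_square)
    then show ?thesis using sv v by (intro exI[of _ u] exI[of _ v]) simp
  qed
qed

text \<open>The Cayley map z \<mapsto> (1+z)/(1-z) sends the closed upper unit half circle onto the
  nonnegative imaginary axis together with the point at infinity (z = 1).  Parametrizing the
  frequencies \<omega> \<in> [0, \<infinity>] by this compact arc is what makes the H-infinity norm a maximum over
  a compact set.\<close>

definition cayley_arc :: "complex set" where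
  "cayley_arc = {z. cmod z = 1 \<and> 0 \<le> Im z}"

lemma one_in_cayley_arc: "1 \<in> cayley_arc"
  by (simp add: cayley_arc_def)

lemma compact_cayley_arc: "compact cayley_arc"
proof -
  have "cayley_arc = sphere 0 1 \<inter> {z. 0 \<le> Im z}" by (auto simp: cayley_arc_def)
  moreover have "closed {z. 0 \<le> Im z}"
    by (intro closed_Collect_le continuous_intros)
  ultimately show ?thesis using compact_Int_closed[OF compact_sphere] by metis
qed

lemma cayley_arc_to_axis:
  assumes "z \<in> cayley_arc" "z \<noteq> 1"
  obtains \<omega> where "\<omega> \<ge> 0" "(1 + z)/(1 - z) = \<i> * complex_of_real \<omega>"
proof
  have "(Re z)^2 + (Im z)^2 = 1" using assms(1) cmod_power2[of z] by (simp add: cayley_arc_def)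
  then have "Re ((1 + z)/(1 - z)) = 0" by (simp add: Re_divide power2_eq_square algebra_simps)
  then show "(1 + z)/(1 - z) = \<i> * complex_of_real (Im ((1 + z)/(1 - z)))"
    by (simp add: complex_eq_iff)
  have "Im ((1 + z)/(1 - z)) = 2 * Im z / (cmod (1 - z))^2"
    by (simp add: Im_divide algebra_simps cmod_power2)
  then show "0 \<le> Im ((1 + z)/(1 - z))" using assms(1) by (simp add: cayley_arc_def)
qed

lemma cayley_arc_onto_axis:
  assumes "0 \<le> \<omega>"
  obtains z where "z \<in> cayley_arc" "z \<noteq> 1" "(1 + z)/(1 - z) = \<i> * complex_of_real \<omega>"
proof
  define s where "s = \<i> * complex_of_real \<omega>"
  have s1: "s + 1 \<noteq> 0" by (simp add: s_def complex_eq_iff)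
  define z where "z = (s - 1)/(s + 1)"
  show "z \<noteq> 1" using s1 by (simp add: z_def field_simps)
  have num: "1 + z = 2 * s / (s + 1)" and den: "1 - z = 2 / (s + 1)"
    using s1 by (simp_all add: z_def field_simps)
  have "2 + s * 2 \<noteq> 0" using s1 by (simp add: complex_eq_iff)
  then show "(1 + z)/(1 - z) = \<i> * complex_of_real \<omega>"
    unfolding num den using s1 by (simp add: s_def field_simps)
  have "cmod (s - 1) = cmod (s + 1)" by (simp add: s_def cmod_def)
  moreover have "Im z = 2 * \<omega> / (cmod (s + 1))^2"
    by (simp add: z_def s_def Im_divide cmod_def power2_eq_square algebra_simps)
  ultimately show "z \<in> cayley_arc" using s1 assms by (simp add: cayley_arc_def z_def norm_divide)
qed

section \<open>The uncertain closed loop\<close>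

context
  fixes A :: "real^'x^'x" and B1 :: "real^'r^'x" and B2 :: "real^'w^'x"
    and C1 :: "real^'x^'r" and C2 :: "real^'x^'z"
    and D11 :: "real^'r^'r" and D12 :: "real^'w^'r"
    and D21 :: "real^'r^'z" and D22 :: "real^'w^'z"
    and blk :: "'r \<Rightarrow> 'm::finite"
begin

text \<open>Complex versions of the closed-loop matrices, written so that they are defined (as
  rational expressions in \<delta>) without assuming well-posedness.\<close>

definition "Delta_c \<delta> = cmat (Delta blk \<delta>)"
definition "N_c \<delta> = mat 1 - cmat D11 ** Delta_c \<delta>"
definition "Phi_c \<delta> = Delta_c \<delta> ** matrix_inv (N_c \<delta>)"
definition "A_c \<delta> = cmat A + cmat B1 ** Phi_c \<delta> ** cmat C1"
definition "B_c \<delta> = cmat B2 + cmat B1 ** Phi_c \<delta> ** cmat D12"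
definition "C_c \<delta> = cmat C2 + cmat D21 ** Phi_c \<delta> ** cmat C1"
definition "D_c \<delta> = cmat D22 + cmat D21 ** Phi_c \<delta> ** cmat D12"

text \<open>With s = (1+z)/(1-z) the resolvent (sI - A)^-1 equals (1-z) (pencil z)^-1, and the
  transfer matrix at s becomes G_arc z; at z = 1 (that is, s = \<infinity>) it is the feedthrough D.
  gain_form is the bilinear form u* G v whose maximum over unit vectors is the largest
  singular value.\<close>

definition "pencil z \<delta> = mat (1 + z) - scale_mat (1 - z) (A_c \<delta>)"
definition "G_arc \<delta> z = scale_mat (1 - z) (C_c \<delta> ** matrix_inv (pencil z \<delta>) ** B_c \<delta>) + D_c \<delta>"
definition "gain_form \<delta> (p :: complex \<times> (complex^'z) \<times> (complex^'w)) =
   (\<Sum>i\<in>UNIV. cnj (fst (snd p) $ i) * (G_arc \<delta> (fst p) *v snd (snd p)) $ i)"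

lemma N_c_cmat: "N_c \<delta> = cmat (mat 1 - D11 ** Delta blk \<delta>)"
  by (simp add: N_c_def Delta_c_def cmat_diff cmat_mult cmat_mat)

lemma well_posed_iff_det_N_c: "well_posed D11 blk \<delta> \<longleftrightarrow> det (N_c \<delta>) \<noteq> 0"
  by (simp add: well_posed_def N_c_cmat det_cmat invertible_det_nz)

lemma closed_loop_cmat:
  assumes "well_posed D11 blk \<delta>"
  shows "A_c \<delta> = cmat (Acl A B1 C1 D11 blk \<delta>)" "B_c \<delta> = cmat (Bcl B2 B1 D12 D11 blk \<delta>)"
    "C_c \<delta> = cmat (Ccl C2 D21 C1 D11 blk \<delta>)" "D_c \<delta> = cmat (Dcl D22 D21 D12 D11 blk \<delta>)"
proof -
  have "Phi_c \<delta> = cmat (Phi D11 blk \<delta>)"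
    using assms unfolding well_posed_def
    by (simp add: Phi_c_def Phi_def N_c_cmat Delta_c_def cmat_mult cmat_inverse)
  then show "A_c \<delta> = cmat (Acl A B1 C1 D11 blk \<delta>)" "B_c \<delta> = cmat (Bcl B2 B1 D12 D11 blk \<delta>)"
    "C_c \<delta> = cmat (Ccl C2 D21 C1 D11 blk \<delta>)" "D_c \<delta> = cmat (Dcl D22 D21 D12 D11 blk \<delta>)"
    by (simp_all add: A_c_def Acl_def B_c_def Bcl_def C_c_def Ccl_def D_c_def Dcl_def cmat_add cmat_mult)
qed

text \<open>Everything is a rational function of \<delta>; so composed with a C1 reparametrization \<phi> it
  forms C1 families wherever the denominators do not vanish.\<close>

lemma C1_matrix_family_N_c:
  fixes \<phi> :: "real^'n \<Rightarrow> real^'m"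
  assumes coord: "\<And>k. C1_family W K (\<lambda>x p. complex_of_real (\<phi> x $ k))"
  shows "C1_matrix_family W K (\<lambda>x p. Delta_c (\<phi> x))" "C1_matrix_family W K (\<lambda>x p. N_c (\<phi> x))"
proof -
  show Delta: "C1_matrix_family W K (\<lambda>x p. Delta_c (\<phi> x))"
    unfolding C1_matrix_family_def
  proof (intro allI)
    show "C1_family W K (\<lambda>x p. Delta_c (\<phi> x) $ i $ j)" for i j
      by (cases "i = j") (auto simp: Delta_c_def cmat_def Delta_def intro: coord C1_family_constant)
  qed
  show "C1_matrix_family W K (\<lambda>x p. N_c (\<phi> x))"
    unfolding N_c_def by (intro C1_matrix_family_diff C1_matrix_family_constant C1_matrix_family_mult Delta)
qed

lemma C1_matrix_family_closed_loop:
  fixes \<phi> :: "real^'n \<Rightarrow> real^'m"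
  assumes coord: "\<And>k. C1_family W K (\<lambda>x p. complex_of_real (\<phi> x $ k))" and "open W"
    and N: "\<And>x. x \<in> W \<Longrightarrow> det (N_c (\<phi> x)) \<noteq> 0"
  shows "C1_matrix_family W K (\<lambda>x p. A_c (\<phi> x))" "C1_matrix_family W K (\<lambda>x p. B_c (\<phi> x))"
    "C1_matrix_family W K (\<lambda>x p. C_c (\<phi> x))" "C1_matrix_family W K (\<lambda>x p. D_c (\<phi> x))"
proof -
  have Phi: "C1_matrix_family W K (\<lambda>x p. Phi_c (\<phi> x))"
    unfolding Phi_c_def using C1_matrix_family_N_c[OF coord] assms(2) N
    by (intro C1_matrix_family_mult C1_matrix_family_inverse) auto
  show "C1_matrix_family W K (\<lambda>x p. A_c (\<phi> x))" "C1_matrix_family W K (\<lambda>x p. B_c (\<phi> x))"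
    "C1_matrix_family W K (\<lambda>x p. C_c (\<phi> x))" "C1_matrix_family W K (\<lambda>x p. D_c (\<phi> x))"
    unfolding A_c_def B_c_def C_c_def D_c_def
    by (intro C1_matrix_family_add C1_matrix_family_mult C1_matrix_family_constant Phi)+
qed

lemma C1_matrix_family_pencil:
  fixes \<phi> :: "real^'n \<Rightarrow> real^'m"
  assumes "C1_matrix_family W K (\<lambda>x p. A_c (\<phi> x))" "continuous_on K \<zeta>"
  shows "C1_matrix_family W K (\<lambda>x p. pencil (\<zeta> p) (\<phi> x))"
  unfolding pencil_def using assms
  by (intro C1_matrix_family_diff C1_matrix_family_mat C1_matrix_family_scale C1_family_const
      continuous_intros)

lemma C1_family_gain_form:
  fixes \<phi> :: "real^'n \<Rightarrow> real^'m" and K :: "(complex \<times> (complex^'z) \<times> (complex^'w)) set"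
  assumes coord: "\<And>k. C1_family W K (\<lambda>x p. complex_of_real (\<phi> x $ k))" and W: "open W"
    and N: "\<And>x. x \<in> W \<Longrightarrow> det (N_c (\<phi> x)) \<noteq> 0"
    and pencil: "\<And>x p. x \<in> W \<Longrightarrow> p \<in> K \<Longrightarrow> det (pencil (fst p) (\<phi> x)) \<noteq> 0"
  shows "C1_family W K (\<lambda>x p. gain_form (\<phi> x) p)"
proof -
  note CL = C1_matrix_family_closed_loop[OF coord W N]
  have cont_fst: "continuous_on K (\<lambda>p. 1 - fst p)" by (intro continuous_intros)
  have G: "C1_matrix_family W K (\<lambda>x p. G_arc (\<phi> x) (fst p))"
    unfolding G_arc_def using W pencil
    by (intro C1_matrix_family_add C1_matrix_family_scale C1_family_const[OF cont_fst]
        C1_matrix_family_mult C1_matrix_family_inverse C1_matrix_family_pencil CL continuous_on_fst)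
      auto
  have row: "C1_family W K (\<lambda>x p. \<Sum>j\<in>UNIV. G_arc (\<phi> x) (fst p) $ i $ j * snd (snd p) $ j)" for i
    by (intro C1_family_sum C1_family_mult C1_matrix_family_entry[OF G] C1_family_const continuous_intros)
      auto
  have cont_u: "continuous_on K (\<lambda>p. cnj (fst (snd p) $ i))" for i
    by (intro continuous_intros)
  show ?thesis
    unfolding gain_form_def matrix_vector_mult_def vec_lambda_beta
    by (intro C1_family_sum C1_family_mult[OF C1_family_const[OF cont_u] row]) auto
qed

lemma G_arc_at_infinity: "G_arc \<delta> 1 = D_c \<delta>"
  by (simp add: G_arc_def)

lemma G_arc_transfer:
  assumes wp: "well_posed D11 blk \<delta>" and z: "z \<noteq> 1" and L: "det (pencil z \<delta>) \<noteq> 0"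
  shows "G_arc \<delta> z = tf (Acl A B1 C1 D11 blk \<delta>) (Bcl B2 B1 D12 D11 blk \<delta>) (Ccl C2 D21 C1 D11 blk \<delta>)
            (Dcl D22 D21 D12 D11 blk \<delta>) ((1 + z)/(1 - z))"
proof -
  have z1: "1 - z \<noteq> 0" using z by simp
  define X where "X = mat ((1 + z)/(1 - z)) - A_c \<delta>"
  have pencil_X: "pencil z \<delta> = scale_mat (1 - z) X"
    using z1 by (simp add: pencil_def X_def scale_mat_def vec_eq_iff mat_def field_simps)
  have inv_pencil: "invertible (pencil z \<delta>)" using L invertible_det_nz by blast
  have X_pencil: "X = scale_mat (inverse (1 - z)) (pencil z \<delta>)"
    using z1 by (simp add: pencil_X scale_mat_scale_mat)
  have "X ** scale_mat (1 - z) (matrix_inv (pencil z \<delta>)) = mat 1"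
    "scale_mat (1 - z) (matrix_inv (pencil z \<delta>)) ** X = mat 1"
    unfolding X_pencil using z1
    by (simp_all add: scale_mat_mult_left scale_mat_mult_right scale_mat_scale_mat matrix_inv_works[OF inv_pencil])
  then have "invertible X" unfolding invertible_def by blast
  then have "matrix_inv (pencil z \<delta>) = scale_mat (inverse (1 - z)) (matrix_inv X)"
    unfolding pencil_X using z1 by (intro scale_mat_inverse)
  then have "G_arc \<delta> z = C_c \<delta> ** matrix_inv X ** B_c \<delta> + D_c \<delta>"
    using z1 by (simp add: G_arc_def scale_mat_mult_left scale_mat_mult_right scale_mat_scale_mat)
  then show ?thesis
    by (simp add: tf_def X_def closed_loop_cmat[OF wp])
qed

text \<open>Internal stability makes the pencil nonsingular on the whole arc: a singular pencil
  would give an eigenvalue (1+z)/(1-z) of A_cl on the imaginary axis, or 2v = 0 if z = 1.\<close>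

lemma pencil_nonsingular:
  assumes "\<delta> \<in> stab_set A B1 C1 D11 blk" "z \<in> cayley_arc"
  shows "det (pencil z \<delta>) \<noteq> 0"
proof
  assume "det (pencil z \<delta>) = 0"
  have wp: "well_posed D11 blk \<delta>" and hw: "hurwitz (Acl A B1 C1 D11 blk \<delta>)"
    using assms(1) by (auto simp: stab_set_def)
  have "\<not> (\<exists>B. B ** pencil z \<delta> = mat 1)"
    using \<open>det (pencil z \<delta>) = 0\<close> invertible_det_nz invertible_left_inverse by blast
  then obtain v where v: "pencil z \<delta> *v v = 0" "v \<noteq> 0"
    unfolding matrix_left_invertible_ker by blast
  have eigen: "(1 + z) *s v = (1 - z) *s (A_c \<delta> *v v)"
    using v(1) by (simp add: pencil_def matrix_vector_mult_diff_rdistrib mat_mult_vec scale_mat_mult_vec)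
  show False
  proof (cases "z = 1")
    case True
    then have "2 *s v = 0" using eigen by simp
    then show False using v(2) by (simp add: vec_eq_iff)
  next
    case False
    obtain \<omega> where \<omega>: "(1 + z)/(1 - z) = \<i> * complex_of_real \<omega>"
      using cayley_arc_to_axis[OF assms(2) False] by blast
    have "A_c \<delta> *v v = ((1 + z)/(1 - z)) *s v"
      using eigen False by (simp add: vec_eq_iff field_simps)
    then have "Re ((1 + z)/(1 - z)) < 0"
      using hw v(2) unfolding hurwitz_def closed_loop_cmat[OF wp] by blast
    then show False using \<omega> by simp
  qed
qed

lemma frequency_gains_on_arc:
  assumes wp: "well_posed D11 blk \<delta>" and L: "\<And>z. z \<in> cayley_arc \<Longrightarrow> det (pencil z \<delta>) \<noteq> 0"
  shows "(\<lambda>\<omega>. sigma_max (tf (Acl A B1 C1 D11 blk \<delta>) (Bcl B2 B1 D12 D11 blk \<delta>) (Ccl C2 D21 C1 D11 blk \<delta>)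
            (Dcl D22 D21 D12 D11 blk \<delta>) (\<i> * complex_of_real \<omega>))) ` {0..}
          \<union> {sigma_max (cmat (Dcl D22 D21 D12 D11 blk \<delta>))}
       = (\<lambda>z. sigma_max (G_arc \<delta> z)) ` cayley_arc" (is "?S = ?T")
proof
  show "?S \<subseteq> ?T"
  proof
    fix t assume "t \<in> ?S"
    then consider \<omega> where "\<omega> \<ge> 0" "t = sigma_max (tf (Acl A B1 C1 D11 blk \<delta>) (Bcl B2 B1 D12 D11 blk \<delta>)
            (Ccl C2 D21 C1 D11 blk \<delta>) (Dcl D22 D21 D12 D11 blk \<delta>) (\<i> * complex_of_real \<omega>))"
      | "t = sigma_max (cmat (Dcl D22 D21 D12 D11 blk \<delta>))" by auto
    then show "t \<in> ?T"
    proof cases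
      case 1
      obtain z where z: "z \<in> cayley_arc" "z \<noteq> 1" "(1 + z)/(1 - z) = \<i> * complex_of_real \<omega>"
        using cayley_arc_onto_axis[OF 1(1)] by blast
      then have "t = sigma_max (G_arc \<delta> z)" using 1(2) G_arc_transfer[OF wp z(2) L[OF z(1)]] by simp
      then show ?thesis using z(1) by blast
    next
      case 2
      then have "t = sigma_max (G_arc \<delta> 1)" by (simp add: G_arc_at_infinity closed_loop_cmat[OF wp])
      then show ?thesis using one_in_cayley_arc by blast
    qed
  qed
  show "?T \<subseteq> ?S"
  proof
    fix t assume "t \<in> ?T"
    then obtain z where z: "z \<in> cayley_arc" "t = sigma_max (G_arc \<delta> z)" by blast
    show "t \<in> ?S"
    proof (cases "z = 1")
      case True
      then show ?thesis using z by (simp add: G_arc_at_infinity closed_loop_cmat[OF wp])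
    next
      case False
      obtain \<omega> where "\<omega> \<ge> 0" "(1 + z)/(1 - z) = \<i> * complex_of_real \<omega>"
        using cayley_arc_to_axis[OF z(1) False] by blast
      then show ?thesis using z G_arc_transfer[OF wp False L[OF z(1)]] by auto
    qed
  qed
qed

lemma hplus_is_max:
  assumes wp: "well_posed D11 blk \<delta>" and L: "\<And>z. z \<in> cayley_arc \<Longrightarrow> det (pencil z \<delta>) \<noteq> 0"
    and cont: "continuous_on (cayley_arc \<times> sphere 0 1 \<times> sphere 0 1) (gain_form \<delta>)"
  shows "(\<exists>p\<in>cayley_arc \<times> sphere 0 1 \<times> sphere 0 1. Re (gain_form \<delta> p) = hplus A B1 B2 C1 C2 D11 D12 D21 D22 blk \<delta>)
       \<and> (\<forall>p\<in>cayley_arc \<times> sphere 0 1 \<times> sphere 0 1. Re (gain_form \<delta> p) \<le> hplus A B1 B2 C1 C2 D11 D12 D21 D22 blk \<delta>)"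
proof -
  let ?K = "cayley_arc \<times> sphere (0::complex^'z) 1 \<times> sphere (0::complex^'w) 1"
  define \<sigma> where "\<sigma> = (\<lambda>z. sigma_max (G_arc \<delta> z))"
  have Re_gain: "Re (gain_form \<delta> (z, u, v)) = u \<bullet> (G_arc \<delta> z *v v)" for z u v
    unfolding gain_form_def fst_conv snd_conv by (rule Re_hermitian_inner)
  have hplus: "hplus A B1 B2 C1 C2 D11 D12 D21 D22 blk \<delta> = Sup (\<sigma> ` cayley_arc)"
    using frequency_gains_on_arc[OF wp L] by (simp add: hplus_def hinf_norm_def \<sigma>_def)
  have "compact ?K" by (intro compact_Times compact_cayley_arc compact_sphere)
  moreover have "?K \<noteq> {}" using one_in_cayley_arc vector_choose_size[of 1] by fastforce
  ultimately obtain p0 where p0: "p0 \<in> ?K" and p0_max: "\<And>p. p \<in> ?K \<Longrightarrow> Re (gain_form \<delta> p) \<le> Re (gain_form \<delta> p0)"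
    using continuous_attains_sup[OF _ _ continuous_on_Re[OF cont]] by blast
  have \<sigma>_le: "\<sigma> z \<le> Re (gain_form \<delta> p0)" if "z \<in> cayley_arc" for z
  proof -
    obtain u v where uv: "norm u = 1" "norm v = 1" "u \<bullet> (G_arc \<delta> z *v v) = \<sigma> z"
      using sigma_max_attained unfolding \<sigma>_def by blast
    then show ?thesis using p0_max[of "(z, u, v)"] that by (simp add: Re_gain)
  qed
  have "Re (gain_form \<delta> p0) \<le> \<sigma> (fst p0)"
    using p0 by (cases p0) (auto simp: Re_gain \<sigma>_def intro!: inner_le_sigma_max)
  then have "Sup (\<sigma> ` cayley_arc) = Re (gain_form \<delta> p0)"
    using p0 \<sigma>_le by (intro cSup_eq_maximum) (auto intro!: image_eqI[of _ \<sigma> "fst p0"] order.antisym)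
  then show ?thesis using p0 p0_max unfolding hplus by auto
qed

text \<open>Well-posedness and nonsingularity of the pencil on the compact arc are open conditions
  (tube lemma), so they hold on a whole neighbourhood of a stable parameter.\<close>

lemma stable_neighbourhood:
  assumes "x0 \<in> stab_set A B1 C1 D11 blk"
  obtains X where "open X" "x0 \<in> X"
    "\<And>x. x \<in> X \<Longrightarrow> det (N_c x) \<noteq> 0 \<and> (\<forall>z\<in>cayley_arc. det (pencil z x) \<noteq> 0)"
proof -
  have coord: "C1_family W (UNIV :: complex set) (\<lambda>x p. complex_of_real ((x :: real^'m) $ k))" for W k
    by (rule C1_family_coord)
  define W where "W = {x. det (N_c x) \<noteq> 0}"
  have "continuous_on UNIV (\<lambda>x. det (N_c x))"
    using C1_family_continuous_in_x[OF C1_family_det[OF C1_matrix_family_N_c(2)[OF coord]] UNIV_I]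
    by simp
  then have "open W" unfolding W_def by (rule open_Collect_neq[OF _ continuous_on_const])
  define Good where "Good = (W \<times> UNIV) \<inter> (\<lambda>q. det (pencil (snd q) (fst q))) -` (UNIV - {0})"
  have "continuous_on (W \<times> UNIV) (\<lambda>q. det (pencil (snd q) (fst q)))"
    using C1_family_continuous[OF C1_family_det[OF C1_matrix_family_pencil[OF
          C1_matrix_family_closed_loop(1)[OF coord \<open>open W\<close>] continuous_on_id]]]
    by (simp add: W_def)
  then have "open Good"
    unfolding Good_def using \<open>open W\<close> by (intro continuous_open_preimage open_Times) auto
  moreover have "{x0} \<times> cayley_arc \<subseteq> Good"
    using assms pencil_nonsingular well_posed_iff_det_N_c by (auto simp: Good_def W_def stab_set_def)
  ultimately have "\<exists>X. x0 \<in> X \<and> open X \<and> X \<times> cayley_arc \<subseteq> Good"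
    by (rule Elementary_Topology.tube_lemma[OF compact_cayley_arc])
  then obtain X where "x0 \<in> X" "open X" "X \<times> cayley_arc \<subseteq> Good" by blast
  then show ?thesis using one_in_cayley_arc by (intro that[of X]) (auto simp: Good_def W_def)
qed

lemma lower_C1_at_hplus:
  assumes x0: "x0 \<in> stab_set A B1 C1 D11 blk"
  shows "lower_C1_at (hplus A B1 B2 C1 C2 D11 D12 D21 D22 blk) x0"
proof -
  let ?K = "cayley_arc \<times> sphere (0::complex^'z) 1 \<times> sphere (0::complex^'w) 1"
  obtain X where X: "open X" "x0 \<in> X"
    and good: "\<And>x. x \<in> X \<Longrightarrow> det (N_c x) \<noteq> 0 \<and> (\<forall>z\<in>cayley_arc. det (pencil z x) \<noteq> 0)"
    using stable_neighbourhood[OF x0] by blast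
  obtain e where e: "e > 0" "ball x0 e \<subseteq> X" using X open_contains_ball by blast
  define r where "r = e / (4 * CARD('m))"
  have card: "real CARD('m) \<ge> 1" using finite_UNIV_card_ge_0[where 'a='m] by simp
  then have "r \<le> e / 4" unfolding r_def using e(1) by (intro divide_left_mono) auto
  then have r: "r > 0" "r < e" using e(1) card by (auto simp: r_def)
  \<comment> \<open>the saturation moves every parameter into X and fixes those near x0\<close>
  have in_X: "sat_map x0 r x \<in> X" for x
  proof -
    have "dist (sat_map x0 r x) x0 \<le> e / 2"
      using sat_map_close[OF r(1), of x0 x] e(1) by (simp add: r_def)
    then show ?thesis using e by (auto simp: dist_commute)
  qed
  have family: "C1_family UNIV ?K (\<lambda>x p. gain_form (sat_map x0 r x) p)"
    by (rule C1_family_gain_form) (use C1_family_sat_map[OF r(1)] good[OF in_X] in auto)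
  show ?thesis
  proof (rule lower_C1_at_from_family[OF family _ continuous_on_hc_encode continuous_on_hc_decode
        hc_decode_encode])
    show "compact ?K" by (intro compact_Times compact_cayley_arc compact_sphere)
    show "open (ball x0 r)" "x0 \<in> ball x0 r" using r by auto
    fix x assume x: "x \<in> ball x0 r"
    then have id: "sat_map x0 r x = x" by (intro sat_map_id) auto
    have "continuous_on ?K (gain_form x)"
      using C1_family_continuous_in_y[OF family UNIV_I, of x] by (simp add: id)
    moreover have "x \<in> X" using x r e by auto
    ultimately show "(\<exists>p\<in>?K. Re (gain_form (sat_map x0 r x) p) = hplus A B1 B2 C1 C2 D11 D12 D21 D22 blk x)
       \<and> (\<forall>p\<in>?K. Re (gain_form (sat_map x0 r x) p) \<le> hplus A B1 B2 C1 C2 D11 D12 D21 D22 blk x)"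
      unfolding id using good well_posed_iff_det_N_c by (intro hplus_is_max) auto
  qed
qed

end

theorem proposition2:
  fixes A :: "real^'x^'x" and B1 :: "real^'r^'x" and B2 :: "real^'w^'x"
    and C1 :: "real^'x^'r" and C2 :: "real^'x^'z"
    and D11 :: "real^'r^'r" and D12 :: "real^'w^'r"
    and D21 :: "real^'r^'z" and D22 :: "real^'w^'z"
    and blk :: "'r \<Rightarrow> 'm::finite"
  shows "lower_C1_on (hplus A B1 B2 C1 C2 D11 D12 D21 D22 blk) (stab_set A B1 C1 D11 blk)
       \<and> upper_C1_on (\<lambda>\<delta>. - hplus A B1 B2 C1 C2 D11 D12 D21 D22 blk \<delta>) (stab_set A B1 C1 D11 blk)"
proof -
  have "lower_C1_on (hplus A B1 B2 C1 C2 D11 D12 D21 D22 blk) (stab_set A B1 C1 D11 blk)"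
    unfolding lower_C1_on_def using lower_C1_at_hplus by blast
  then show ?thesis unfolding upper_C1_on_def by simp
qed

end
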